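(* Let $P$ be a set of $n\geq 5$ points in general position in the plane such that exactly $5$ points of $P$ lie on the boundary of the convex hull of $P$. Then $\mu(D(P))\geq\binom{n}{2}-9$.
   Context: General position means no three points collinear. $D(P)$ is the graph whose vertices are all closed segments with both endpoints in $P$, two adjacent iff disjoint. For a graph $G$ and $U\subseteq V(G)$, two distinct vertices $x,y\in U$ are $U$-mutually visible if $G$ contains a shortest $x$-$y$ path none of whose internal vertices lies in $U$; $U$ is a mutual-visibility set if every two distinct vertices of $U$ are $U$-mutually visible. $\mu(G)$ is the maximum size of a mutual-visibility set of $G$. *)

theory Defs
  imports "HOL-Analysis.Analysis"
begin

definition is_walk :: "'v set \<Rightarrow> ('v \<Rightarrow> 'v \<Rightarrow> bool) \<Rightarrow> 'v list \<Rightarrow> bool" where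
  "is_walk V E xs \<longleftrightarrow> xs \<noteq> [] \<and> set xs \<subseteq> V \<and>
     (\<forall>i. Suc i < length xs \<longrightarrow> E (xs ! i) (xs ! Suc i))"

definition is_shortest_path :: "'v set \<Rightarrow> ('v \<Rightarrow> 'v \<Rightarrow> bool) \<Rightarrow> 'v \<Rightarrow> 'v \<Rightarrow> 'v list \<Rightarrow> bool" where
  "is_shortest_path V E x y xs \<longleftrightarrow> is_walk V E xs \<and> hd xs = x \<and> last xs = y \<and>
     (\<forall>ys. is_walk V E ys \<and> hd ys = x \<and> last ys = y \<longrightarrow> length xs \<le> length ys)"

definition internal_vertices :: "'v list \<Rightarrow> 'v set" where
  "internal_vertices xs = set (butlast (tl xs))"

definition mutually_visible :: "'v set \<Rightarrow> ('v \<Rightarrow> 'v \<Rightarrow> bool) \<Rightarrow> 'v set \<Rightarrow> 'v \<Rightarrow> 'v \<Rightarrow> bool" where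
  "mutually_visible V E U x y \<longleftrightarrow>
     (\<exists>xs. is_shortest_path V E x y xs \<and> internal_vertices xs \<inter> U = {})"

definition mutual_visibility_set :: "'v set \<Rightarrow> ('v \<Rightarrow> 'v \<Rightarrow> bool) \<Rightarrow> 'v set \<Rightarrow> bool" where
  "mutual_visibility_set V E U \<longleftrightarrow> U \<subseteq> V \<and>
     (\<forall>x\<in>U. \<forall>y\<in>U. x \<noteq> y \<longrightarrow> mutually_visible V E U x y)"

definition mu :: "'v set \<Rightarrow> ('v \<Rightarrow> 'v \<Rightarrow> bool) \<Rightarrow> nat" where
  "mu V E = Max {card U | U. mutual_visibility_set V E U}"

definition general_position :: "(real^2) set \<Rightarrow> bool" where
  "general_position P \<longleftrightarrow>
     (\<forall>a\<in>P. \<forall>b\<in>P. \<forall>c\<in>P. a \<noteq> b \<and> a \<noteq> c \<and> b \<noteq> c \<longrightarrow> \<not> collinear {a, b, c})"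

definition D_vertices :: "(real^2) set \<Rightarrow> (real^2) set set" where
  "D_vertices P = {closed_segment a b | a b. a \<in> P \<and> b \<in> P \<and> a \<noteq> b}"

definition D_adj :: "(real^2) set \<Rightarrow> (real^2) set \<Rightarrow> bool" where
  "D_adj s t \<longleftrightarrow> s \<inter> t = {}"

end

theory Submission
  imports Defs
begin

text \<open>
  The five hull points form a convex pentagon v1 ... v5. Let W be a set of nine segments and U the
  set of all other segments. Two crossing members of U that are both disjoint from some member of W
  are joined through it by a shortest path of length 2 avoiding U, so U is a mutual-visibility set
  if every crossing pair in U has such a common neighbour in W. A segment crossed by no other
  segment is disjoint from every segment avoiding its endpoints, so it suffices that for any four
  points of P some uncrossed segment of W avoids all of them.

  If some ear v(i-1) v(i) v(i+1) contains no further point of P, let W be the five hull edges and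
  the four diagonals other than v(i-1) v(i+1). A crossing pair in U then either avoids one of the
  edges, or consists of v(i-1) v(i+1) and a segment avoiding v(i-1), v(i), v(i+1), which lies
  strictly beyond that diagonal. Otherwise let r(i) be the point of P inside the ear at v(i)
  farthest from the diagonal v(i-1) v(i+1). Each v(i) r(i) is uncrossed and r(i) differs from
  r(i+2); after a rotation r(1) differs from r(2), and W consists of the five segments v(i) r(i)
  and the hull edges other than v1 v2.
\<close>

section \<open>Mutual-visibility sets from common neighbours\<close>

lemma walk_length_ge_2:
  assumes "is_walk V E ys" "hd ys = x" "last ys = y" "x \<noteq> y"
  shows "length ys \<ge> 2"
  using assms by (cases ys) (auto simp: is_walk_def Suc_le_eq split: if_splits)

lemma walk_length_ge_3:
  assumes "is_walk V E ys" "hd ys = x" "last ys = y" "x \<noteq> y" "\<not> E x y"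
  shows "length ys \<ge> 3"
proof (rule ccontr)
  assume "\<not> length ys \<ge> 3"
  with walk_length_ge_2[OF assms(1-4)] have "length ys = 2" by simp
  then obtain a b where "ys = [a, b]" by (auto simp: length_Suc_conv numeral_2_eq_2)
  with assms show False by (auto simp: is_walk_def)
qed

lemma shortest_path_adjacent:
  assumes "x \<in> V" "y \<in> V" "x \<noteq> y" "E x y"
  shows "is_shortest_path V E x y [x, y]"
proof -
  have "is_walk V E [x, y]" using assms by (auto simp: is_walk_def less_Suc_eq)
  moreover have "length [x, y] \<le> length ys" if "is_walk V E ys" "hd ys = x" "last ys = y" for ys
    using walk_length_ge_2[OF that assms(3)] by simp
  ultimately show ?thesis unfolding is_shortest_path_def by auto
qed

lemma shortest_path_common_neighbour:
  assumes "x \<in> V" "y \<in> V" "w \<in> V" "x \<noteq> y" "\<not> E x y" "E x w" "E w y"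
  shows "is_shortest_path V E x y [x, w, y]"
proof -
  have "is_walk V E [x, w, y]" using assms by (auto simp: is_walk_def less_Suc_eq)
  moreover have "length [x, w, y] \<le> length ys" if "is_walk V E ys" "hd ys = x" "last ys = y" for ys
    using walk_length_ge_3[OF that assms(4,5)] by simp
  ultimately show ?thesis unfolding is_shortest_path_def by auto
qed

lemma mutual_visibility_set_if_common_neighbours:
  assumes "U \<subseteq> V"
    and "\<And>x y. x \<in> U \<Longrightarrow> y \<in> U \<Longrightarrow> x \<noteq> y \<Longrightarrow> \<not> E x y \<Longrightarrow> \<exists>w\<in>V - U. E x w \<and> E w y"
  shows "mutual_visibility_set V E U"
  unfolding mutual_visibility_set_def
proof (intro conjI ballI impI)
  fix x y assume xy: "x \<in> U" "y \<in> U" "x \<noteq> y"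
  show "mutually_visible V E U x y"
  proof (cases "E x y")
    case True
    then have "is_shortest_path V E x y [x, y]"
      using xy assms(1) by (intro shortest_path_adjacent) auto
    then show ?thesis unfolding mutually_visible_def internal_vertices_def by fastforce
  next
    case False
    with assms(2)[OF xy] obtain w where "w \<in> V - U" "E x w" "E w y" by blast
    moreover from this have "is_shortest_path V E x y [x, w, y]"
      using xy False assms(1) by (intro shortest_path_common_neighbour) auto
    ultimately show ?thesis unfolding mutually_visible_def internal_vertices_def by fastforce
  qed
qed (use assms in blast)

lemma card_le_mu:
  assumes "finite V" "mutual_visibility_set V E U"
  shows "card U \<le> mu V E"
proof -
  have "{card U | U. mutual_visibility_set V E U} \<subseteq> card ` Pow V"
    unfolding mutual_visibility_set_def by auto
  then have "finite {card U | U. mutual_visibility_set V E U}"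
    using assms(1) finite_subset by blast
  then show ?thesis unfolding mu_def using assms(2) by (intro Max_ge) auto
qed

lemma mu_ge_card_diff:
  assumes "finite V" "W \<subseteq> V"
    and "\<And>x y. x \<in> V - W \<Longrightarrow> y \<in> V - W \<Longrightarrow> x \<noteq> y \<Longrightarrow> \<not> E x y \<Longrightarrow> \<exists>w\<in>W. E x w \<and> E w y"
  shows "mu V E \<ge> card V - card W"
proof -
  have "mutual_visibility_set V E (V - W)"
    using assms(2,3) by (intro mutual_visibility_set_if_common_neighbours) (auto, blast)
  then have "card (V - W) \<le> mu V E" using card_le_mu assms(1) by blast
  then show ?thesis using card_Diff_subset[OF finite_subset[OF assms(2,1)] assms(2)] by simp
qed

section \<open>Orientation of point triples\<close>

text \<open>Twice the signed area of the triangle a b c: positive iff c lies to the left of the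
  directed line from a to b.\<close>
definition orient :: "real^2 \<Rightarrow> real^2 \<Rightarrow> real^2 \<Rightarrow> real" where
  "orient a b c = (b$1 - a$1) * (c$2 - a$2) - (b$2 - a$2) * (c$1 - a$1)"

lemma orient_rotate: "orient a b c = orient b c a"
  by (simp add: orient_def algebra_simps)

lemma orient_swap: "orient a c b = - orient a b c"
  by (simp add: orient_def algebra_simps)

lemma orient_antisym: "orient b a c = - orient a b c"
  by (simp add: orient_def algebra_simps)

lemma orient_degenerate [simp]: "orient a b a = 0" "orient a b b = 0" "orient a a b = 0"
  by (simp_all add: orient_def)

lemma orient_sum: "orient a b p + orient b c p + orient c a p = orient a b c"
  unfolding orient_def by (simp add: algebra_simps)

lemma orient_cross_identity:
  "orient c d e * orient c a p = orient c p e * orient c a d + orient c d p * orient c a e"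
  unfolding orient_def by (simp add: algebra_simps)

lemma inner_vec2: "(u::real^2) \<bullet> x = u$1 * x$1 + u$2 * x$2"
  by (simp add: inner_vec_def sum_2)

lemma orient_inner_identity:
  "orient a p q * (u \<bullet> (s - a)) + orient a q s * (u \<bullet> (p - a)) + orient a s p * (u \<bullet> (q - a)) = 0"
  unfolding orient_def inner_vec2 by (simp add: algebra_simps)

lemma parallel_vec2:
  fixes x y :: "real^2"
  assumes "x$1 * y$2 = x$2 * y$1" "x \<noteq> 0"
  shows "y = ((x \<bullet> y) / (x \<bullet> x)) *\<^sub>R x"
proof -
  have nz: "x \<bullet> x \<noteq> 0" using assms(2) by simp
  have "(x \<bullet> x) * y$1 = (x \<bullet> y) * x$1" "(x \<bullet> x) * y$2 = (x \<bullet> y) * x$2"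
    using assms(1) unfolding inner_vec2 by (auto simp: algebra_simps)
  then show ?thesis using nz by (simp add: vec_eq_iff forall_2 field_simps)
qed

lemma collinear_if_orient_eq_0:
  assumes "orient a b c = 0"
  shows "collinear {a, b, c}"
proof (cases "a = b")
  case False
  then have "c - b = (((a - b) \<bullet> (c - b)) / ((a - b) \<bullet> (a - b))) *\<^sub>R (a - b)"
    using assms by (intro parallel_vec2) (auto simp: orient_def algebra_simps)
  then show ?thesis by (subst collinear_3) (auto simp: collinear_lemma)
qed (simp add: collinear_2)

lemma orient_neq_0:
  assumes "general_position P" "a \<in> P" "b \<in> P" "c \<in> P" "a \<noteq> b" "a \<noteq> c" "b \<noteq> c"
  shows "orient a b c \<noteq> 0"
  using assms collinear_if_orient_eq_0 unfolding general_position_def by blast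

lemma orient_convex_combination:
  "orient a b ((1 - u) *\<^sub>R x + u *\<^sub>R y) = (1 - u) * orient a b x + u * orient a b y"
  by (simp add: orient_def algebra_simps)

lemma orient_eq_0_if_in_closed_segment:
  assumes "z \<in> closed_segment a b"
  shows "orient a b z = 0"
  using assms by (auto simp: in_segment orient_convex_combination)

lemma orient_closed_segment_ge_min:
  assumes "z \<in> closed_segment p q"
  shows "min (orient a b p) (orient a b q) \<le> orient a b z"
proof -
  obtain u where u: "0 \<le> u" "u \<le> 1" "z = (1 - u) *\<^sub>R p + u *\<^sub>R q"
    using assms by (auto simp: in_segment)
  let ?m = "min (orient a b p) (orient a b q)"
  have "(1 - u) * ?m + u * ?m \<le> (1 - u) * orient a b p + u * orient a b q"
    using u(1,2) by (intro add_mono mult_left_mono) auto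
  then show ?thesis unfolding u(3) orient_convex_combination by (simp add: algebra_simps)
qed

lemma not_in_closed_segment_if_general_position:
  assumes "general_position P" "p \<in> P" "q \<in> P" "r \<in> P" "r \<noteq> p" "r \<noteq> q"
  shows "r \<notin> closed_segment p q"
  using assms orient_neq_0[of P p q r] orient_eq_0_if_in_closed_segment by (cases "p = q") auto

lemma closed_segment_disjoint_if_left:
  assumes "orient a b p > 0" "orient a b q > 0"
  shows "closed_segment a b \<inter> closed_segment p q = {}"
  using assms orient_eq_0_if_in_closed_segment orient_closed_segment_ge_min[of _ p q a b]
  by fastforce

lemma closed_segment_disjoint_if_below:
  assumes "orient a c v < orient a c r" "orient a c r \<le> orient a c p" "orient a c r \<le> orient a c q"
    and "r \<notin> closed_segment p q"
  shows "closed_segment v r \<inter> closed_segment p q = {}"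
proof (rule ccontr)
  assume "closed_segment v r \<inter> closed_segment p q \<noteq> {}"
  then obtain z where z: "z \<in> closed_segment v r" "z \<in> closed_segment p q" by blast
  then obtain u where u: "0 \<le> u" "u \<le> 1" "z = (1 - u) *\<^sub>R v + u *\<^sub>R r"
    by (auto simp: in_segment)
  have "orient a c r \<le> orient a c z"
    using orient_closed_segment_ge_min[OF z(2), of a c] assms(2,3) by linarith
  also have "orient a c z = orient a c r - (1 - u) * (orient a c r - orient a c v)"
    unfolding u(3) orient_convex_combination by (simp add: algebra_simps)
  finally have "u = 1"
    using u(2) assms(1) by (simp add: mult_le_0_iff)
  then show False using u(3) z(2) assms(4) by simp
qed

section \<open>Edges of the convex hull\<close>

definition hull_edge :: "(real^2) set \<Rightarrow> real^2 \<Rightarrow> real^2 \<Rightarrow> bool" where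
  "hull_edge P a b \<longleftrightarrow> a \<in> P \<and> b \<in> P \<and> a \<noteq> b \<and> (\<forall>q\<in>P - {a, b}. orient a b q > 0)"

lemma hull_edgeD: "hull_edge P a b \<Longrightarrow> q \<in> P \<Longrightarrow> q \<noteq> a \<Longrightarrow> q \<noteq> b \<Longrightarrow> orient a b q > 0"
  unfolding hull_edge_def by blast

lemma hull_edge_inj:
  assumes "hull_edge P a b" "hull_edge P c b"
  shows "a = c"
proof (rule ccontr)
  assume "a \<noteq> c"
  then have "orient a b c > 0" "orient c b a > 0"
    using assms hull_edgeD unfolding hull_edge_def by auto
  moreover have "orient c b a = - orient a b c"
    using orient_rotate[of a b c] orient_swap[of b c a] orient_rotate[of c b a] by simp
  ultimately show False by simp
qed

lemma hull_edge_not_sym: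
  assumes "hull_edge P a b" "q \<in> P" "q \<noteq> a" "q \<noteq> b"
  shows "\<not> hull_edge P b a"
  using assms hull_edgeD[of P b a q] orient_antisym[of a b q] by (force simp: hull_edge_def)

lemma orient_eq_inner: "orient a b x = vector [a$2 - b$2, b$1 - a$1] \<bullet> (x - a)"
  by (simp add: orient_def inner_vec2 algebra_simps)

lemma hull_edge_frontier:
  assumes "hull_edge P a b"
  shows "a \<in> frontier (convex hull P)" "b \<in> frontier (convex hull P)"
proof -
  define w :: "real^2" where "w = vector [a$2 - b$2, b$1 - a$1]"
  have "w \<noteq> 0" using assms by (auto simp: hull_edge_def w_def vec_eq_iff forall_2)
  have "{x. orient a b x \<ge> 0} = {x. w \<bullet> x \<ge> w \<bullet> a}"
    by (simp add: orient_eq_inner inner_diff_right w_def)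
  moreover have "P \<subseteq> {x. orient a b x \<ge> 0}"
    using assms hull_edgeD[OF assms] by (force simp: hull_edge_def)
  ultimately have "P \<subseteq> {x. w \<bullet> x \<ge> w \<bullet> a}" by simp
  then have "convex hull P \<subseteq> {x. w \<bullet> x \<ge> w \<bullet> a}"
    by (intro hull_minimal convex_halfspace_ge)
  then have "interior (convex hull P) \<subseteq> {x. w \<bullet> x > w \<bullet> a}"
    using interior_mono interior_halfspace_ge[OF \<open>w \<noteq> 0\<close>] by blast
  moreover have "w \<bullet> b = w \<bullet> a"
    using orient_eq_inner[of a b b] by (simp add: inner_diff_right w_def)
  moreover have "a \<in> closure (convex hull P)" "b \<in> closure (convex hull P)"
    using assms unfolding hull_edge_def by (meson closure_subset hull_inc subsetD)+
  ultimately show "a \<in> frontier (convex hull P)" "b \<in> frontier (convex hull P)"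
    unfolding frontier_def by auto
qed

lemma not_collinear_if_general_position:
  assumes "general_position P" "finite P" "card P \<ge> 3"
  shows "\<not> collinear P"
proof -
  obtain S where "S \<subseteq> P" "card S = 3" using obtain_subset_with_card_n assms(3) by metis
  moreover from this obtain a b c where "S = {a, b, c}" "a \<noteq> b" "b \<noteq> c" "a \<noteq> c"
    by (auto simp: card_3_iff)
  ultimately show ?thesis using assms(1) collinear_subset unfolding general_position_def by blast
qed

lemma supporting_line_at_frontier:
  fixes P :: "(real^2) set"
  assumes "\<not> collinear P" "a \<in> frontier (convex hull P)"
  obtains u where "u \<noteq> 0" "\<forall>q\<in>P. u \<bullet> q \<le> u \<bullet> a"
proof -
  have "aff_dim (convex hull P) = int DIM(real^2)"
    using assms(1) aff_dim_le_DIM[of P] collinear_aff_dim[of P] by (simp add: aff_dim_convex_hull)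
  then have "rel_interior (convex hull P) = interior (convex hull P)"
    using aff_dim_eq_full rel_interior_interior by metis
  then obtain w where w: "w \<noteq> 0" "\<And>y. y \<in> closure (convex hull P) \<Longrightarrow> w \<bullet> a \<le> w \<bullet> y"
    using assms(2) supporting_hyperplane_relative_frontier[OF convex_convex_hull]
    unfolding frontier_def by (metis DiffD1 DiffD2)
  have "\<forall>q\<in>P. (- w) \<bullet> q \<le> (- w) \<bullet> a"
    using w(2) closure_subset hull_inc by fastforce
  with w(1) show ?thesis using that[of "- w"] by simp
qed

lemma orient_eq_0_if_orthogonal:
  assumes "u \<noteq> 0" "u \<bullet> (p - a) = 0" "u \<bullet> (q - a) = 0"
  shows "orient a p q = 0"
proof -
  have "u$1 * (p$1 - a$1) + u$2 * (p$2 - a$2) = 0" "u$1 * (q$1 - a$1) + u$2 * (q$2 - a$2) = 0"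
    using assms(2,3) by (simp_all add: inner_vec2)
  then have "orient a p q * u$1 = 0" "orient a p q * u$2 = 0"
    unfolding orient_def by algebra+
  moreover have "u$1 \<noteq> 0 \<or> u$2 \<noteq> 0" using assms(1) by (auto simp: vec_eq_iff forall_2)
  ultimately show ?thesis by auto
qed

lemma orient_trans_in_halfplane:
  assumes "u \<noteq> 0" "u \<bullet> (p - a) \<le> 0" "u \<bullet> (q - a) \<le> 0" "u \<bullet> (s - a) \<le> 0"
    and "orient a p q > 0" "orient a q s > 0" "orient a p s \<noteq> 0"
  shows "orient a p s > 0"
proof (rule ccontr)
  assume "\<not> orient a p s > 0"
  then have sp: "orient a s p > 0" using assms(7) orient_swap[of a s p] by linarith
  have "orient a p q * (u \<bullet> (s - a)) \<le> 0" "orient a q s * (u \<bullet> (p - a)) \<le> 0"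
    "orient a s p * (u \<bullet> (q - a)) \<le> 0"
    using assms sp by (simp_all add: mult_nonneg_nonpos)
  then have "orient a q s * (u \<bullet> (p - a)) = 0" "orient a s p * (u \<bullet> (q - a)) = 0"
    using orient_inner_identity[of a p q u s] by linarith+
  then have "orient a p q = 0"
    using assms(1,6) sp orient_eq_0_if_orthogonal by simp
  with assms(5) show False by simp
qed

lemma hull_edge_exists:
  assumes "finite P" "general_position P" "a \<in> P" "card P \<ge> 2"
    and "u \<noteq> 0" "\<forall>q\<in>P. u \<bullet> q \<le> u \<bullet> a"
  shows "\<exists>b. hull_edge P a b"
proof -
  define Q where "Q = P - {a}"
  define R where "R = {(s, b). s \<in> Q \<and> b \<in> Q \<and> orient a s b > 0}"
  have gp: "orient a s b \<noteq> 0" if "s \<in> Q" "b \<in> Q" "s \<noteq> b" for s b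
    using that orient_neq_0[OF assms(2)] assms(3) by (auto simp: Q_def)
  have "trans R"
  proof (rule transI)
    fix s q b assume "(s, q) \<in> R" "(q, b) \<in> R"
    then have sqb: "s \<in> Q" "q \<in> Q" "b \<in> Q" "orient a s q > 0" "orient a q b > 0"
      by (auto simp: R_def)
    then have "s \<noteq> b" using orient_swap[of a q s] by auto
    then have "orient a s b > 0"
      using sqb gp assms(6) by (intro orient_trans_in_halfplane[OF assms(5) _ _ _ sqb(4,5)])
        (auto simp: Q_def inner_diff_right)
    then show "(s, b) \<in> R" using sqb by (auto simp: R_def)
  qed
  moreover have "(x, x) \<notin> R" for x by (simp add: R_def)
  ultimately have "acyclic R" by (simp add: acyclic_def)
  moreover have "finite R"
    using assms(1) by (intro finite_subset[of R "P \<times> P"]) (auto simp: R_def Q_def)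
  ultimately have "wf R" by (rule finite_acyclic_wf[rotated])
  moreover have "Q \<noteq> {}"
    using assms(3,4) card_mono[OF finite.intros(2)[OF finite.emptyI], of P a] by (auto simp: Q_def)
  ultimately obtain b where b: "b \<in> Q" "\<And>s. (s, b) \<in> R \<Longrightarrow> s \<notin> Q"
    using wfE_min' by metis
  have "orient a b q > 0" if "q \<in> Q" "q \<noteq> b" for q
  proof (rule ccontr)
    assume "\<not> orient a b q > 0"
    then have "orient a q b > 0" using gp[OF that(1) b(1) that(2)] orient_swap[of a q b] by linarith
    then have "(q, b) \<in> R" using that(1) b(1) by (simp add: R_def)
    with b(2) that(1) show False by blast
  qed
  then have "hull_edge P a b" using assms(3) b(1) by (auto simp: hull_edge_def Q_def)
  then show ?thesis by blast
qed

section \<open>The hull pentagon\<close>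

lemma card_ge_3_if_no_short_cycles:
  assumes "finite C" "C \<noteq> {}" "f ` C \<subseteq> C" "\<forall>x\<in>C. f x \<noteq> x \<and> f (f x) \<noteq> x"
  shows "card C \<ge> 3"
proof -
  obtain x where x: "x \<in> C" using assms(2) by blast
  then have "f x \<in> C" using assms(3) by blast
  then have "x \<noteq> f x" "f x \<noteq> f (f x)" "x \<noteq> f (f x)" using x assms(4) by auto
  then have "{x, f x, f (f x)} \<subseteq> C" "card {x, f x, f (f x)} = 3"
    using x \<open>f x \<in> C\<close> assms(3) by auto
  then show ?thesis using card_mono[OF assms(1)] by metis
qed

lemma image_Diff_subset_if_inj_on:
  assumes "finite S" "inj_on f H" "f ` H \<subseteq> H" "S \<subseteq> H" "f ` S \<subseteq> S"
  shows "f ` (H - S) \<subseteq> H - S"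
proof -
  have "f ` S = S" using assms by (intro endo_inj_surj) (auto intro: inj_on_subset)
  with assms(2-4) show ?thesis by (auto simp: inj_on_def) (metis imageE subsetD)
qed

lemma five_cycle_if_no_short_cycles:
  assumes "finite H" "card H = 5" "f ` H \<subseteq> H" "inj_on f H" "\<forall>x\<in>H. f x \<noteq> x \<and> f (f x) \<noteq> x"
  obtains v1 v2 v3 v4 v5 where "H = {v1, v2, v3, v4, v5}" "distinct [v1, v2, v3, v4, v5]"
    "f v1 = v2" "f v2 = v3" "f v3 = v4" "f v4 = v5" "f v5 = v1"
proof -
  have invariant_eq: "S = H" if "S \<subseteq> H" "f ` S \<subseteq> S" "card H < card S + 3" for S
  proof (rule ccontr)
    assume "S \<noteq> H"
    have "finite S" using that(1) assms(1) finite_subset by blast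
    then have "card (H - S) \<ge> 3"
      using that(1,2) \<open>S \<noteq> H\<close> assms image_Diff_subset_if_inj_on[of S f H]
      by (intro card_ge_3_if_no_short_cycles) auto
    then show False using card_Diff_subset[OF \<open>finite S\<close> that(1)] that(3) by linarith
  qed
  obtain v1 where v1: "v1 \<in> H" using assms(2) by fastforce
  define v2 where "v2 = f v1"
  define v3 where "v3 = f v2"
  define v4 where "v4 = f v3"
  define v5 where "v5 = f v4"
  have inH: "v2 \<in> H" "v3 \<in> H" "v4 \<in> H" "v5 \<in> H"
    using v1 assms(3) by (auto simp: v2_def v3_def v4_def v5_def)
  have short: "v1 \<noteq> v2" "v2 \<noteq> v3" "v3 \<noteq> v4" "v4 \<noteq> v5" "v1 \<noteq> v3" "v2 \<noteq> v4" "v3 \<noteq> v5"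
    using v1 inH assms(5) by (auto simp: v2_def v3_def v4_def v5_def)
  have "v1 \<noteq> v4"
  proof
    assume "v1 = v4"
    then have "f v3 = v1" by (simp add: v4_def)
    moreover have "card {v1, v2, v3} = 3" using short by simp
    ultimately have "{v1, v2, v3} = H"
      using v1 inH assms(2) by (intro invariant_eq) (auto simp: v2_def v3_def)
    then show False using assms(2) \<open>card {v1, v2, v3} = 3\<close> by simp
  qed
  then have "v2 \<noteq> v5" using inj_onD[OF assms(4)] v1 inH by (auto simp: v2_def v5_def)
  have "v1 \<noteq> v5"
  proof
    assume "v1 = v5"
    then have "f v4 = v1" by (simp add: v5_def)
    moreover have "card {v1, v2, v3, v4} = 4" using short \<open>v1 \<noteq> v4\<close> by simp
    ultimately have "{v1, v2, v3, v4} = H"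
      using v1 inH assms(2) by (intro invariant_eq) (auto simp: v2_def v3_def v4_def)
    then show False using assms(2) \<open>card {v1, v2, v3, v4} = 4\<close> by simp
  qed
  have distinct: "distinct [v1, v2, v3, v4, v5]"
    using short \<open>v1 \<noteq> v4\<close> \<open>v2 \<noteq> v5\<close> \<open>v1 \<noteq> v5\<close> by auto
  then have H: "H = {v1, v2, v3, v4, v5}"
    using v1 inH assms(1,2) by (intro card_subset_eq[symmetric]) auto
  have "f v5 \<in> H" "f v5 \<noteq> v5" using inH(4) assms(3,5) by auto
  moreover have "f v5 \<noteq> v2" "f v5 \<noteq> v3" "f v5 \<noteq> v4"
    using inj_onD[OF assms(4)] v1 inH distinct by (auto simp: v2_def v3_def v4_def)
  ultimately have "f v5 = v1" using H by blast
  with that H distinct show ?thesis by (simp add: v2_def v3_def v4_def v5_def)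
qed

definition hull_pentagon :: "(real^2) set \<Rightarrow> real^2 \<Rightarrow> real^2 \<Rightarrow> real^2 \<Rightarrow> real^2 \<Rightarrow> real^2 \<Rightarrow> bool"
  where "hull_pentagon P v1 v2 v3 v4 v5 \<longleftrightarrow> distinct [v1, v2, v3, v4, v5] \<and>
    hull_edge P v1 v2 \<and> hull_edge P v2 v3 \<and> hull_edge P v3 v4 \<and> hull_edge P v4 v5 \<and> hull_edge P v5 v1"

lemma hull_pentagon_rotate: "hull_pentagon P v1 v2 v3 v4 v5 \<Longrightarrow> hull_pentagon P v2 v3 v4 v5 v1"
  unfolding hull_pentagon_def by auto

lemma hull_pentagon_exists:
  assumes "finite P" "general_position P" "card (P \<inter> frontier (convex hull P)) = 5"
  obtains v1 v2 v3 v4 v5 where "hull_pentagon P v1 v2 v3 v4 v5"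
proof -
  define H where "H = P \<inter> frontier (convex hull P)"
  have "card P \<ge> 5"
    using assms(3) card_mono[OF assms(1), of H] by (auto simp: H_def)
  then have "\<not> collinear P" using not_collinear_if_general_position assms(1,2) by simp
  have "\<exists>b. hull_edge P a b" if a: "a \<in> H" for a
  proof -
    obtain u where "u \<noteq> 0" "\<forall>q\<in>P. u \<bullet> q \<le> u \<bullet> a"
      using supporting_line_at_frontier[OF \<open>\<not> collinear P\<close>] a by (auto simp: H_def)
    then show ?thesis
      using hull_edge_exists[OF assms(1,2)] a \<open>card P \<ge> 5\<close> by (auto simp: H_def)
  qed
  then obtain f where edge: "\<And>a. a \<in> H \<Longrightarrow> hull_edge P a (f a)" by metis
  have "f a \<in> H" if "a \<in> H" for a
    using edge[OF that] hull_edge_frontier(2) unfolding H_def hull_edge_def by blast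
  then have "f ` H \<subseteq> H" by blast
  have "inj_on f H" using edge hull_edge_inj by (metis inj_onI)
  have "\<forall>x\<in>H. f x \<noteq> x \<and> f (f x) \<noteq> x"
  proof
    fix x assume "x \<in> H"
    have "f x \<in> H" using \<open>f ` H \<subseteq> H\<close> \<open>x \<in> H\<close> by blast
    have "card {x, f x} \<le> 2" by (simp add: card_insert_if)
    then have "card (P - {x, f x}) > 0"
      using \<open>card P \<ge> 5\<close> diff_card_le_card_Diff[of "{x, f x}" P] by simp
    then obtain q where "q \<in> P" "q \<noteq> x" "q \<noteq> f x" by (metis DiffE card_gt_0_iff ex_in_conv insertCI)
    then have "\<not> hull_edge P (f x) x" using edge[OF \<open>x \<in> H\<close>] hull_edge_not_sym by blast
    then show "f x \<noteq> x \<and> f (f x) \<noteq> x"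
      using edge[OF \<open>x \<in> H\<close>] edge[OF \<open>f x \<in> H\<close>] unfolding hull_edge_def by metis
  qed
  moreover have "finite H" "card H = 5" using assms(1,3) by (simp_all add: H_def)
  ultimately obtain v1 v2 v3 v4 v5 where H: "H = {v1, v2, v3, v4, v5}"
    and "distinct [v1, v2, v3, v4, v5]"
    and "f v1 = v2" "f v2 = v3" "f v3 = v4" "f v4 = v5" "f v5 = v1"
    using five_cycle_if_no_short_cycles[of H f] \<open>f ` H \<subseteq> H\<close> \<open>inj_on f H\<close> by blast
  moreover have "v1 \<in> H" "v2 \<in> H" "v3 \<in> H" "v4 \<in> H" "v5 \<in> H" unfolding H by simp_all
  ultimately have "hull_pentagon P v1 v2 v3 v4 v5"
    unfolding hull_pentagon_def by (metis edge)
  then show ?thesis by (rule that)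
qed

section \<open>Uncrossed segments and ears\<close>

definition uncrossed :: "(real^2) set \<Rightarrow> real^2 \<Rightarrow> real^2 \<Rightarrow> bool" where
  "uncrossed P a b \<longleftrightarrow> a \<in> P \<and> b \<in> P \<and> a \<noteq> b \<and>
     (\<forall>p\<in>P - {a, b}. \<forall>q\<in>P - {a, b}. closed_segment a b \<inter> closed_segment p q = {})"

lemma uncrossedD:
  assumes "uncrossed P a b" "p \<in> P" "q \<in> P" "a \<notin> {p, q}" "b \<notin> {p, q}"
  shows "closed_segment p q \<inter> closed_segment a b = {}"
  using assms unfolding uncrossed_def by blast

lemma uncrossed_if_hull_edge: "hull_edge P a b \<Longrightarrow> uncrossed P a b"
  unfolding uncrossed_def using closed_segment_disjoint_if_left hull_edgeD
  by (metis DiffE hull_edge_def insertCI)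

text \<open>For consecutive hull vertices a, v, c, the point r is the point of P inside the triangle
  a v c farthest from the diagonal a c.\<close>
definition ear_top :: "(real^2) set \<Rightarrow> real^2 \<Rightarrow> real^2 \<Rightarrow> real^2 \<Rightarrow> real^2 \<Rightarrow> bool" where
  "ear_top P a v c r \<longleftrightarrow>
     r \<in> P \<and> r \<noteq> v \<and> orient a c r < 0 \<and> (\<forall>p\<in>P - {v}. orient a c r \<le> orient a c p)"

lemma orient_apex_lt:
  assumes "hull_edge P a v" "hull_edge P v c" "a \<noteq> c" "p \<in> P" "p \<noteq> v"
  shows "orient a c v < orient a c p"
proof -
  have "c \<in> P" "c \<noteq> v" using assms(2) by (auto simp: hull_edge_def)
  then have "orient a v c > 0" using hull_edgeD[OF assms(1)] assms(3) by simp
  moreover have "orient a c v = - orient a v c" by (rule orient_swap)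
  moreover have "orient c a p = - orient a c p" by (rule orient_antisym)
  moreover have "orient a v p > 0" "orient v c p > 0" if "p \<noteq> a" "p \<noteq> c"
    using that hull_edgeD[OF assms(1) assms(4)] hull_edgeD[OF assms(2) assms(4)] assms(5) by auto
  ultimately show ?thesis using orient_sum[of a v p c] by (cases "p = a \<or> p = c") auto
qed

lemma uncrossed_if_ear_top:
  assumes "general_position P" "hull_edge P a v" "hull_edge P v c" "a \<noteq> c" "ear_top P a v c r"
  shows "uncrossed P v r"
  unfolding uncrossed_def
proof (intro conjI ballI)
  show "v \<in> P" "r \<in> P" "v \<noteq> r" using assms(2,5) by (auto simp: hull_edge_def ear_top_def)
  fix p q assume "p \<in> P - {v, r}" "q \<in> P - {v, r}"
  moreover have "orient a c v < orient a c r"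
    using orient_apex_lt[OF assms(2-4)] assms(5) by (simp add: ear_top_def)
  moreover have "r \<notin> closed_segment p q"
    using not_in_closed_segment_if_general_position[OF assms(1)] \<open>r \<in> P\<close> calculation(1,2) by blast
  ultimately show "closed_segment v r \<inter> closed_segment p q = {}"
    using assms(5) by (intro closed_segment_disjoint_if_below) (auto simp: ear_top_def)
qed

lemma ear_top_not_vertex:
  assumes "hull_pentagon P v1 v2 v3 v4 v5" "ear_top P v1 v2 v3 r"
  shows "r \<notin> {v1, v2, v3, v4, v5}"
proof -
  have "orient v3 v4 v1 > 0" "orient v5 v1 v3 > 0"
    using assms(1) hull_edgeD unfolding hull_pentagon_def hull_edge_def by auto
  then have "orient v1 v3 v4 > 0" "orient v1 v3 v5 > 0"
    using orient_rotate[of v1 v3 v4] orient_rotate[of v5 v1 v3] orient_rotate[of v1 v3 v5] by simp_all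
  then show ?thesis using assms(2) unfolding ear_top_def by auto
qed

lemma ear_tops_distinct:
  assumes "hull_pentagon P v1 v2 v3 v4 v5" "ear_top P v1 v2 v3 r" "ear_top P v3 v4 v5 r'"
  shows "r \<noteq> r'"
proof
  assume "r = r'"
  have e34: "hull_edge P v3 v4" and e51: "hull_edge P v5 v1"
    using assms(1) unfolding hull_pentagon_def by auto
  have "r \<in> P" "r \<notin> {v1, v2, v3, v4, v5}"
    using assms(2) ear_top_not_vertex[OF assms(1,2)] by (auto simp: ear_top_def)
  then have "orient v3 v4 r > 0" using hull_edgeD[OF e34] by auto
  moreover have "orient v3 v4 v5 > 0" "orient v3 v4 v1 > 0" "orient v5 v1 v3 > 0"
    using assms(1) hull_edgeD unfolding hull_pentagon_def hull_edge_def by auto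
  moreover have "orient v1 v3 r < 0" "orient v3 v5 r < 0"
    using assms(2,3) \<open>r = r'\<close> by (auto simp: ear_top_def)
  ultimately have "orient v3 v4 v5 * orient v3 v1 r > 0" "orient v3 r v5 * orient v3 v1 v4 < 0"
    "orient v3 v4 r * orient v3 v1 v5 < 0"
    using orient_rotate[of v3 v1 r] orient_rotate[of v1 r v3] orient_swap[of v3 r v5]
      orient_swap[of v3 v1 v4] orient_rotate[of v3 v5 v1] orient_rotate[of v5 v1 v3]
      orient_swap[of v3 v1 v5] orient_antisym[of v1 v3 r]
    by (simp_all add: mult_pos_neg mult_neg_pos)
  then show False using orient_cross_identity[of v3 v4 v5 v1 r] by linarith
qed

lemma ear_empty_or_top:
  assumes "finite P" "general_position P" "hull_pentagon P v1 v2 v3 v4 v5"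
  shows "(\<forall>p\<in>P - {v1, v2, v3}. orient v1 v3 p > 0) \<or> (\<exists>r. ear_top P v1 v2 v3 r)"
proof (cases "\<exists>p\<in>P - {v2}. orient v1 v3 p < 0")
  case True
  define m where "m = Min (orient v1 v3 ` (P - {v2}))"
  have "m \<in> orient v1 v3 ` (P - {v2})" unfolding m_def using True assms(1) by (intro Min_in) auto
  then obtain r where "r \<in> P - {v2}" "orient v1 v3 r = m" by blast
  moreover have "m \<le> orient v1 v3 p" if "p \<in> P - {v2}" for p
    unfolding m_def using assms(1) that by (intro Min_le) auto
  ultimately have "ear_top P v1 v2 v3 r"
    using True unfolding ear_top_def by fastforce
  then show ?thesis by blast
next
  case False
  have "v1 \<in> P" "v3 \<in> P" "v1 \<noteq> v3"
    using assms(3) unfolding hull_pentagon_def hull_edge_def by auto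
  then have "orient v1 v3 p \<noteq> 0" if "p \<in> P - {v1, v2, v3}" for p
    using orient_neq_0[OF assms(2)] that by auto
  then show ?thesis using False by force
qed

section \<open>The mutual-visibility number of D(P)\<close>

lemma D_vertices_eq_image: "D_vertices P = (\<lambda>S. convex hull S) ` {S. S \<subseteq> P \<and> card S = 2}"
  unfolding D_vertices_def
proof (intro equalityI subsetI)
  fix x assume "x \<in> {closed_segment a b |a b. a \<in> P \<and> b \<in> P \<and> a \<noteq> b}"
  then obtain a b where "x = closed_segment a b" "a \<in> P" "b \<in> P" "a \<noteq> b" by blast
  then show "x \<in> (\<lambda>S. convex hull S) ` {S. S \<subseteq> P \<and> card S = 2}"
    by (intro image_eqI[of _ _ "{a, b}"]) (auto simp: segment_convex_hull)
next
  fix x assume "x \<in> (\<lambda>S. convex hull S) ` {S. S \<subseteq> P \<and> card S = 2}"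
  then obtain a b where "x = convex hull {a, b}" "a \<in> P" "b \<in> P" "a \<noteq> b"
    by (auto simp: card_2_iff)
  then show "x \<in> {closed_segment a b |a b. a \<in> P \<and> b \<in> P \<and> a \<noteq> b}"
    by (auto simp: segment_convex_hull)
qed

lemma card_D_vertices:
  assumes "finite P"
  shows "card (D_vertices P) = card P choose 2"
proof -
  have "inj_on (\<lambda>S. convex hull S) {S. S \<subseteq> P \<and> card S = 2}"
    by (rule inj_onI) (auto simp: card_2_iff segment_convex_hull[symmetric])
  from card_image[OF this] show ?thesis
    unfolding D_vertices_eq_image using n_subsets[OF assms] by simp
qed

lemma finite_D_vertices: "finite P \<Longrightarrow> finite (D_vertices P)"
  unfolding D_vertices_eq_image by simp

lemma mu_D_ge_if_witness_pairs:
  assumes "finite P" "\<forall>(a, b)\<in>set ws. a \<in> P \<and> b \<in> P \<and> a \<noteq> b"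
    and "\<And>p q p' q'. p \<in> P \<Longrightarrow> q \<in> P \<Longrightarrow> p' \<in> P \<Longrightarrow> q' \<in> P \<Longrightarrow> p \<noteq> q \<Longrightarrow> p' \<noteq> q' \<Longrightarrow>
      {p, q} \<noteq> {p', q'} \<Longrightarrow> \<forall>(a, b)\<in>set ws. {p, q} \<noteq> {a, b} \<and> {p', q'} \<noteq> {a, b} \<Longrightarrow>
      closed_segment p q \<inter> closed_segment p' q' \<noteq> {} \<Longrightarrow>
      \<exists>(a, b)\<in>set ws. closed_segment p q \<inter> closed_segment a b = {} \<and>
        closed_segment a b \<inter> closed_segment p' q' = {}"
  shows "mu (D_vertices P) D_adj \<ge> (card P choose 2) - length ws"
proof -
  define W where "W = (\<lambda>(a, b). closed_segment a b) ` set ws"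
  have in_W: "closed_segment a b \<in> W" if "(a, b) \<in> set ws" for a b
    using that rev_image_eqI[of "(a, b)" "set ws" _ "\<lambda>(a, b). closed_segment a b"] by (simp add: W_def)
  have card_W: "card W \<le> length ws"
    unfolding W_def using card_image_le card_length order_trans by blast
  have "W \<subseteq> D_vertices P"
  proof
    fix w assume "w \<in> W"
    then obtain a b where "(a, b) \<in> set ws" "w = closed_segment a b" unfolding W_def by auto
    then show "w \<in> D_vertices P" using assms(2) unfolding D_vertices_def by blast
  qed
  moreover have "\<exists>w\<in>W. D_adj x w \<and> D_adj w y"
    if xy: "x \<in> D_vertices P - W" "y \<in> D_vertices P - W" "x \<noteq> y" "\<not> D_adj x y" for x y
  proof -
    obtain p q p' q' where x: "x = closed_segment p q" and y: "y = closed_segment p' q'"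
      and pq: "p \<in> P" "q \<in> P" "p' \<in> P" "q' \<in> P" "p \<noteq> q" "p' \<noteq> q'"
      using xy(1,2) unfolding D_vertices_def by blast
    have "closed_segment a b \<noteq> x \<and> closed_segment a b \<noteq> y" if "(a, b) \<in> set ws" for a b
      using in_W[OF that] xy(1,2) by blast
    then have "\<forall>(a, b)\<in>set ws. {p, q} \<noteq> {a, b} \<and> {p', q'} \<noteq> {a, b}"
      unfolding x y by auto
    moreover have "{p, q} \<noteq> {p', q'}" using xy(3) x y by auto
    moreover have "closed_segment p q \<inter> closed_segment p' q' \<noteq> {}"
      using xy(4) x y by (simp add: D_adj_def)
    ultimately obtain a b where "(a, b) \<in> set ws" "closed_segment p q \<inter> closed_segment a b = {}"
      "closed_segment a b \<inter> closed_segment p' q' = {}"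
      using assms(3)[OF pq] by blast
    then show ?thesis using in_W unfolding D_adj_def x y by blast
  qed
  ultimately have "mu (D_vertices P) D_adj \<ge> card (D_vertices P) - card W"
    using finite_D_vertices[OF assms(1)] by (intro mu_ge_card_diff) auto
  then show ?thesis using card_D_vertices[OF assms(1)] card_W by linarith
qed

lemma pair_avoiding_four_points_ear_tops:
  fixes v1 v2 v3 v4 v5 r1 r2 r3 r4 r5 p q p' q' :: 'a
  assumes "distinct [v1, v2, v3, v4, v5]"
    and "r1 \<notin> {v5, v1, v2, v3, v4}" "r2 \<notin> {v1, v2, v3, v4, v5}" "r3 \<notin> {v2, v3, v4, v5, v1}"
      "r4 \<notin> {v3, v4, v5, v1, v2}" "r5 \<notin> {v4, v5, v1, v2, v3}"
    and "r1 \<noteq> r2" "r1 \<noteq> r3" "r2 \<noteq> r4" "r3 \<noteq> r5" "r4 \<noteq> r1" "r5 \<noteq> r2"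
  shows "\<exists>(a, b)\<in>set [(v2, v3), (v3, v4), (v4, v5), (v5, v1),
      (v1, r1), (v2, r2), (v3, r3), (v4, r4), (v5, r5)]. a \<notin> {p, q, p', q'} \<and> b \<notin> {p, q, p', q'}"
  using assms by simp smt

lemma pair_avoiding_four_points_empty_ear:
  fixes v1 v2 v3 v4 v5 p q p' q' :: 'a
  assumes "distinct [v1, v2, v3, v4, v5]" "p \<noteq> q" "p' \<noteq> q'" "{p, q} \<noteq> {p', q'}"
    and "\<forall>(a, b)\<in>set [(v1, v2), (v2, v3), (v3, v4), (v4, v5), (v5, v1),
      (v1, v4), (v2, v4), (v2, v5), (v3, v5)]. {p, q} \<noteq> {a, b} \<and> {p', q'} \<noteq> {a, b}"
  shows "(\<exists>(a, b)\<in>set [(v1, v2), (v2, v3), (v3, v4), (v4, v5), (v5, v1)].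
          a \<notin> {p, q, p', q'} \<and> b \<notin> {p, q, p', q'})
    \<or> ({p, q} = {v1, v3} \<and> p' \<notin> {v1, v2, v3} \<and> q' \<notin> {v1, v2, v3})
    \<or> ({p', q'} = {v1, v3} \<and> p \<notin> {v1, v2, v3} \<and> q \<notin> {v1, v2, v3})"
  using assms by (simp add: doubleton_eq_iff) smt

lemma mu_D_ge_if_ear_tops:
  assumes "finite P" "general_position P" "hull_pentagon P v1 v2 v3 v4 v5"
    and "ear_top P v5 v1 v2 r1" "ear_top P v1 v2 v3 r2" "ear_top P v2 v3 v4 r3"
      "ear_top P v3 v4 v5 r4" "ear_top P v4 v5 v1 r5" "r1 \<noteq> r2"
  shows "mu (D_vertices P) D_adj \<ge> (card P choose 2) - 9"
proof -
  have pe: "hull_pentagon P v2 v3 v4 v5 v1" "hull_pentagon P v3 v4 v5 v1 v2"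
    "hull_pentagon P v4 v5 v1 v2 v3" "hull_pentagon P v5 v1 v2 v3 v4"
    using assms(3) hull_pentagon_rotate by blast+
  have uncrossed_ear: "uncrossed P b r"
    if "hull_pentagon P a b c d e" "ear_top P a b c r" for a b c d e r
    using that uncrossed_if_ear_top[OF assms(2)] unfolding hull_pentagon_def by auto
  define ws where "ws = [(v2, v3), (v3, v4), (v4, v5), (v5, v1),
    (v1, r1), (v2, r2), (v3, r3), (v4, r4), (v5, r5)]"
  have uncrossed: "\<forall>(a, b)\<in>set ws. uncrossed P a b"
    using assms(3) uncrossed_if_hull_edge uncrossed_ear[OF pe(4) assms(4)]
      uncrossed_ear[OF assms(3,5)] uncrossed_ear[OF pe(1) assms(6)]
      uncrossed_ear[OF pe(2) assms(7)] uncrossed_ear[OF pe(3) assms(8)]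
    unfolding ws_def hull_pentagon_def by auto
  have "distinct [v1, v2, v3, v4, v5]" using assms(3) by (simp add: hull_pentagon_def)
  from pair_avoiding_four_points_ear_tops[OF this
      ear_top_not_vertex[OF pe(4) assms(4)] ear_top_not_vertex[OF assms(3,5)]
      ear_top_not_vertex[OF pe(1) assms(6)] ear_top_not_vertex[OF pe(2) assms(7)]
      ear_top_not_vertex[OF pe(3) assms(8)] assms(9)
      ear_tops_distinct[OF pe(4) assms(4,6)] ear_tops_distinct[OF assms(3,5,7)]
      ear_tops_distinct[OF pe(1) assms(6,8)] ear_tops_distinct[OF pe(2) assms(7,4)]
      ear_tops_distinct[OF pe(3) assms(8,5)]]
  have avoiding: "\<exists>(a, b)\<in>set ws. a \<notin> {p, q, p', q'} \<and> b \<notin> {p, q, p', q'}" for p q p' q'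
    unfolding ws_def .
  have "mu (D_vertices P) D_adj \<ge> (card P choose 2) - length ws"
  proof (rule mu_D_ge_if_witness_pairs[OF assms(1)])
    show "\<forall>(a, b)\<in>set ws. a \<in> P \<and> b \<in> P \<and> a \<noteq> b"
      using uncrossed unfolding uncrossed_def by auto
    fix p q p' q' assume "p \<in> P" "q \<in> P" "p' \<in> P" "q' \<in> P"
    with avoiding[of p q p' q'] uncrossed uncrossedD
    show "\<exists>(a, b)\<in>set ws. closed_segment p q \<inter> closed_segment a b = {} \<and>
        closed_segment a b \<inter> closed_segment p' q' = {}"
      by (fastforce simp: Int_commute)
  qed
  then show ?thesis by (simp add: ws_def)
qed

lemma mu_D_ge_if_empty_ear:
  assumes "finite P" "hull_pentagon P v1 v2 v3 v4 v5"
    and "\<forall>p\<in>P - {v1, v2, v3}. orient v1 v3 p > 0"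
  shows "mu (D_vertices P) D_adj \<ge> (card P choose 2) - 9"
proof -
  define es where "es = [(v1, v2), (v2, v3), (v3, v4), (v4, v5), (v5, v1)]"
  define ws where "ws = [(v1, v2), (v2, v3), (v3, v4), (v4, v5), (v5, v1),
    (v1, v4), (v2, v4), (v2, v5), (v3, v5)]"
  have uncrossed: "\<forall>(a, b)\<in>set es. uncrossed P a b"
    using assms(2) uncrossed_if_hull_edge unfolding es_def hull_pentagon_def by auto
  have "mu (D_vertices P) D_adj \<ge> (card P choose 2) - length ws"
  proof (rule mu_D_ge_if_witness_pairs[OF assms(1)])
    show "\<forall>(a, b)\<in>set ws. a \<in> P \<and> b \<in> P \<and> a \<noteq> b"
      using assms(2) unfolding ws_def hull_pentagon_def hull_edge_def by auto
    fix p q p' q'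
    assume P: "p \<in> P" "q \<in> P" "p' \<in> P" "q' \<in> P"
      and pairs: "p \<noteq> q" "p' \<noteq> q'" "{p, q} \<noteq> {p', q'}"
        "\<forall>(a, b)\<in>set ws. {p, q} \<noteq> {a, b} \<and> {p', q'} \<noteq> {a, b}"
      and crossing: "closed_segment p q \<inter> closed_segment p' q' \<noteq> {}"
    have "distinct [v1, v2, v3, v4, v5]" using assms(2) by (simp add: hull_pentagon_def)
    from pair_avoiding_four_points_empty_ear[OF this pairs[unfolded ws_def]]
    consider (edge) a b where "(a, b) \<in> set es" "a \<notin> {p, q, p', q'}" "b \<notin> {p, q, p', q'}"
      | (diagonal) "{p, q} = {v1, v3}" "p' \<notin> {v1, v2, v3}" "q' \<notin> {v1, v2, v3}"
      | (diagonal') "{p', q'} = {v1, v3}" "p \<notin> {v1, v2, v3}" "q \<notin> {v1, v2, v3}"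
      unfolding es_def by blast
    then show "\<exists>(a, b)\<in>set ws. closed_segment p q \<inter> closed_segment a b = {} \<and>
        closed_segment a b \<inter> closed_segment p' q' = {}"
    proof cases
      case edge
      then have "(a, b) \<in> set ws" by (auto simp: es_def ws_def)
      with edge show ?thesis using uncrossed uncrossedD[of P a b] P by (fastforce simp: Int_commute)
    next
      case diagonal
      then have "closed_segment p q = closed_segment v1 v3" by simp
      moreover have "closed_segment v1 v3 \<inter> closed_segment p' q' = {}"
        using diagonal(2,3) assms(3) P by (intro closed_segment_disjoint_if_left) auto
      ultimately show ?thesis using crossing by (simp only:)
    next
      case diagonal'
      then have "closed_segment p' q' = closed_segment v1 v3" by simp
      moreover have "closed_segment v1 v3 \<inter> closed_segment p q = {}"
        using diagonal'(2,3) assms(3) P by (intro closed_segment_disjoint_if_left) auto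
      ultimately show ?thesis using crossing by (simp only: Int_commute)
    qed
  qed
  then show ?thesis by (simp add: ws_def)
qed

lemma mu_D_ge_if_hull_pentagon:
  assumes "finite P" "general_position P" "hull_pentagon P v1 v2 v3 v4 v5"
  shows "mu (D_vertices P) D_adj \<ge> (card P choose 2) - 9"
proof -
  have pe: "hull_pentagon P v2 v3 v4 v5 v1" "hull_pentagon P v3 v4 v5 v1 v2"
    "hull_pentagon P v4 v5 v1 v2 v3" "hull_pentagon P v5 v1 v2 v3 v4"
    using assms(3) hull_pentagon_rotate by blast+
  show ?thesis
  proof (cases "\<exists>r1 r2 r3 r4 r5. ear_top P v5 v1 v2 r1 \<and> ear_top P v1 v2 v3 r2 \<and>
      ear_top P v2 v3 v4 r3 \<and> ear_top P v3 v4 v5 r4 \<and> ear_top P v4 v5 v1 r5")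
    case True
    then obtain r1 r2 r3 r4 r5 where tops: "ear_top P v5 v1 v2 r1" "ear_top P v1 v2 v3 r2"
      "ear_top P v2 v3 v4 r3" "ear_top P v3 v4 v5 r4" "ear_top P v4 v5 v1 r5"
      by blast
    have "r1 \<noteq> r3" using ear_tops_distinct[OF pe(4) tops(1,3)] .
    then consider "r1 \<noteq> r2" | "r2 \<noteq> r3" by blast
    then show ?thesis
      using mu_D_ge_if_ear_tops[OF assms tops] mu_D_ge_if_ear_tops[OF assms(1,2) pe(1) tops(2-5,1)]
      by cases
  next
    case False
    then show ?thesis
      using ear_empty_or_top[OF assms(1,2)] assms(3) pe mu_D_ge_if_empty_ear[OF assms(1)] by meson
  qed
qed

theorem lemma14:
  fixes P :: "(real^2) set" and n :: nat
  assumes "finite P" and "card P = n" and "n \<ge> 5"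
    and "general_position P"
    and "card (P \<inter> frontier (convex hull P)) = 5"
  shows "mu (D_vertices P) D_adj \<ge> (n choose 2) - 9"
proof -
  \<comment> \<open>The hypothesis n \<ge> 5 is implied by the five hull points.\<close>
  obtain v1 v2 v3 v4 v5 where "hull_pentagon P v1 v2 v3 v4 v5"
    using hull_pentagon_exists[OF assms(1,4,5)] .
  then show ?thesis using mu_D_ge_if_hull_pentagon[OF assms(1,4)] assms(2) by simp
qed

end
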